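(* Let $G$ be a maximal $3$-$\gamma_{c}$-vertex critical graph, let $I$ be a maximum independent set of $G$, and let $W$ be a vertex set inducing a maximum complete subgraph of $G$, chosen (among all such sets) so that $|I\cap W|$ is minimum. If $|I|+|W|=n-1$, where $n=|V(G)|$, then $|W\cap I|=0$.
   Context: All graphs are finite, simple and connected. A set $D\subseteq V(G)$ is a connected dominating set of $G$ if every vertex of $G$ is in $D$ or adjacent to a vertex of $D$, and $G[D]$ is connected; $\gamma_{c}(G)$ is the minimum cardinality of such a set. $G$ is $k$-$\gamma_{c}$-edge critical if $\gamma_{c}(G)=k$ and $\gamma_{c}(G+uv)<k$ for every pair of non-adjacent vertices $u,v$. A $2$-connected graph $G$ is $k$-$\gamma_{c}$-vertex critical if $\gamma_{c}(G)=k$ and $\gamma_{c}(G-v)<k$ for every $v\in V(G)$. $G$ is maximal $k$-$\gamma_{c}$-vertex critical if it is both $k$-$\gamma_{c}$-edge critical and $k$-$\gamma_{c}$-vertex critical. *)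

theory Defs
  imports Main
begin

definition simple_graph :: "'a set \<Rightarrow> ('a \<Rightarrow> 'a \<Rightarrow> bool) \<Rightarrow> bool" where
  "simple_graph V E \<longleftrightarrow> finite V \<and> V \<noteq> {} \<and>
     (\<forall>x y. E x y \<longrightarrow> x \<in> V \<and> y \<in> V \<and> x \<noteq> y \<and> E y x)"

definition induced_connected :: "('a \<Rightarrow> 'a \<Rightarrow> bool) \<Rightarrow> 'a set \<Rightarrow> bool" where
  "induced_connected E S \<longleftrightarrow> S \<noteq> {} \<and>
     (\<forall>x\<in>S. \<forall>y\<in>S. (\<lambda>a b. E a b \<and> a \<in> S \<and> b \<in> S)\<^sup>*\<^sup>* x y)"

definition graph_connected :: "'a set \<Rightarrow> ('a \<Rightarrow> 'a \<Rightarrow> bool) \<Rightarrow> bool" where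
  "graph_connected V E \<longleftrightarrow> induced_connected E V"

definition dominating :: "'a set \<Rightarrow> ('a \<Rightarrow> 'a \<Rightarrow> bool) \<Rightarrow> 'a set \<Rightarrow> bool" where
  "dominating V E D \<longleftrightarrow> D \<subseteq> V \<and> (\<forall>v\<in>V. v \<in> D \<or> (\<exists>d\<in>D. E v d))"

definition connected_dominating :: "'a set \<Rightarrow> ('a \<Rightarrow> 'a \<Rightarrow> bool) \<Rightarrow> 'a set \<Rightarrow> bool" where
  "connected_dominating V E D \<longleftrightarrow> dominating V E D \<and> induced_connected E D"

definition gamma_c :: "'a set \<Rightarrow> ('a \<Rightarrow> 'a \<Rightarrow> bool) \<Rightarrow> nat" where
  "gamma_c V E = (LEAST k. \<exists>D. connected_dominating V E D \<and> card D = k)"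

definition add_edge :: "('a \<Rightarrow> 'a \<Rightarrow> bool) \<Rightarrow> 'a \<Rightarrow> 'a \<Rightarrow> ('a \<Rightarrow> 'a \<Rightarrow> bool)" where
  "add_edge E u v = (\<lambda>x y. E x y \<or> (x = u \<and> y = v) \<or> (x = v \<and> y = u))"

definition del_vertex :: "('a \<Rightarrow> 'a \<Rightarrow> bool) \<Rightarrow> 'a \<Rightarrow> ('a \<Rightarrow> 'a \<Rightarrow> bool)" where
  "del_vertex E v = (\<lambda>x y. E x y \<and> x \<noteq> v \<and> y \<noteq> v)"

definition two_connected :: "'a set \<Rightarrow> ('a \<Rightarrow> 'a \<Rightarrow> bool) \<Rightarrow> bool" where
  "two_connected V E \<longleftrightarrow> card V \<ge> 3 \<and> graph_connected V E \<and>
     (\<forall>v\<in>V. graph_connected (V - {v}) (del_vertex E v))"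

definition edge_critical :: "nat \<Rightarrow> 'a set \<Rightarrow> ('a \<Rightarrow> 'a \<Rightarrow> bool) \<Rightarrow> bool" where
  "edge_critical k V E \<longleftrightarrow> gamma_c V E = k \<and>
     (\<forall>u\<in>V. \<forall>v\<in>V. u \<noteq> v \<and> \<not> E u v \<longrightarrow> gamma_c V (add_edge E u v) < k)"

definition vertex_critical :: "nat \<Rightarrow> 'a set \<Rightarrow> ('a \<Rightarrow> 'a \<Rightarrow> bool) \<Rightarrow> bool" where
  "vertex_critical k V E \<longleftrightarrow> two_connected V E \<and> gamma_c V E = k \<and>
     (\<forall>v\<in>V. gamma_c (V - {v}) (del_vertex E v) < k)"

definition maximal_vertex_critical :: "nat \<Rightarrow> 'a set \<Rightarrow> ('a \<Rightarrow> 'a \<Rightarrow> bool) \<Rightarrow> bool" where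
  "maximal_vertex_critical k V E \<longleftrightarrow> edge_critical k V E \<and> vertex_critical k V E"

definition independent_set :: "'a set \<Rightarrow> ('a \<Rightarrow> 'a \<Rightarrow> bool) \<Rightarrow> 'a set \<Rightarrow> bool" where
  "independent_set V E I \<longleftrightarrow> I \<subseteq> V \<and> (\<forall>x\<in>I. \<forall>y\<in>I. \<not> E x y)"

definition max_independent_set :: "'a set \<Rightarrow> ('a \<Rightarrow> 'a \<Rightarrow> bool) \<Rightarrow> 'a set \<Rightarrow> bool" where
  "max_independent_set V E I \<longleftrightarrow> independent_set V E I \<and>
     (\<forall>J. independent_set V E J \<longrightarrow> card J \<le> card I)"

definition clique :: "'a set \<Rightarrow> ('a \<Rightarrow> 'a \<Rightarrow> bool) \<Rightarrow> 'a set \<Rightarrow> bool" where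
  "clique V E W \<longleftrightarrow> W \<subseteq> V \<and> (\<forall>x\<in>W. \<forall>y\<in>W. x \<noteq> y \<longrightarrow> E x y)"

definition max_clique :: "'a set \<Rightarrow> ('a \<Rightarrow> 'a \<Rightarrow> bool) \<Rightarrow> 'a set \<Rightarrow> bool" where
  "max_clique V E W \<longleftrightarrow> clique V E W \<and> (\<forall>W'. clique V E W' \<longrightarrow> card W' \<le> card W)"

end

theory Submission
  imports Defs
begin

text \<open>Since \<open>\<gamma>\<^sub>c(G) = 3\<close>, no vertex and no edge dominates \<open>G\<close>; vertex criticality yields,
  for each \<open>v\<close>, an edge dominating \<open>G - v\<close> and missing \<open>v\<close>, and edge criticality yields,
  for each non-edge \<open>uv\<close>, a vertex or edge dominating \<open>G + uv\<close>.
  If \<open>I\<close> and \<open>W\<close> meet, they meet in one vertex \<open>x\<close>, and the counting hypothesis leaves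
  exactly two vertices \<open>a\<close>, \<open>b\<close> outside \<open>I \<union> W\<close>. The edge dominating \<open>G - x\<close> shows that
  \<open>x\<close> misses one of them, say \<open>b\<close>. The edges dominating \<open>G - y\<close>, \<open>y \<in> W - {x}\<close>, then
  all pass through \<open>a\<close>, so \<open>a\<close> is adjacent to \<open>x\<close> but to no other vertex of \<open>W\<close>.
  If \<open>ab\<close> is an edge this forces \<open>W = {x, y}\<close>, and \<open>{a, b}\<close> is a maximum clique
  disjoint from \<open>I\<close>; otherwise edge criticality makes \<open>b\<close> adjacent to all of \<open>W - {x}\<close>,
  and \<open>W - {x} \<union> {b}\<close> is such a clique. Either way the choice of \<open>W\<close> is contradicted.\<close>

definition dominating_pair :: "'a set \<Rightarrow> ('a \<Rightarrow> 'a \<Rightarrow> bool) \<Rightarrow> 'a \<Rightarrow> 'a \<Rightarrow> bool" where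
  "dominating_pair V E s t \<longleftrightarrow> s \<in> V \<and> t \<in> V \<and> (s = t \<or> E s t) \<and>
     (\<forall>w\<in>V. w = s \<or> w = t \<or> E w s \<or> E w t)"

lemma dominating_pairD:
  assumes "dominating_pair V E s t"
  shows "s \<in> V" "t \<in> V" "s = t \<or> E s t" "w \<in> V \<Longrightarrow> w = s \<or> w = t \<or> E w s \<or> E w t"
  using assms unfolding dominating_pair_def by blast+

lemma simple_graph_finite: "simple_graph V E \<Longrightarrow> finite V"
  unfolding simple_graph_def by blast

lemma simple_graph_sym: "simple_graph V E \<Longrightarrow> E u v \<Longrightarrow> E v u"
  unfolding simple_graph_def by blast

lemma simple_graph_irrefl: "simple_graph V E \<Longrightarrow> \<not> E u u"
  unfolding simple_graph_def by blast

lemma dominating_pair_sym: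
  assumes "\<And>u v. E u v \<Longrightarrow> E v u"
  shows "dominating_pair V E s t \<Longrightarrow> dominating_pair V E t s"
  using assms unfolding dominating_pair_def by blast

lemma induced_connected_neighbour:
  assumes "induced_connected E S" "u \<in> S" "v \<in> S" "u \<noteq> v"
  shows "\<exists>z\<in>S. E u z"
proof -
  have "(\<lambda>a b. E a b \<and> a \<in> S \<and> b \<in> S)\<^sup>*\<^sup>* u v"
    using assms unfolding induced_connected_def by blast
  then show ?thesis
    using \<open>u \<noteq> v\<close> by (cases rule: converse_rtranclpE) auto
qed

lemma connected_dominating_self: "graph_connected V E \<Longrightarrow> connected_dominating V E V"
  unfolding graph_connected_def connected_dominating_def dominating_def by simp

lemma connected_dominating_pair:
  assumes sym: "\<And>u v. E u v \<Longrightarrow> E v u" and st: "dominating_pair V E s t"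
  shows "connected_dominating V E {s, t}"
  unfolding connected_dominating_def dominating_def induced_connected_def
proof (intro conjI ballI)
  show "{s, t} \<subseteq> V" "\<And>v. v \<in> V \<Longrightarrow> v \<in> {s, t} \<or> (\<exists>d\<in>{s, t}. E v d)"
    using st unfolding dominating_pair_def by auto
  fix u v assume uv: "u \<in> {s, t}" "v \<in> {s, t}"
  show "(\<lambda>a b. E a b \<and> a \<in> {s, t} \<and> b \<in> {s, t})\<^sup>*\<^sup>* u v"
  proof (cases "u = v")
    case False
    then have "E u v" using uv st sym unfolding dominating_pair_def by auto
    then show ?thesis using uv by (intro r_into_rtranclp) simp
  qed simp
qed simp

lemma gamma_c_le_card: "connected_dominating V E D \<Longrightarrow> gamma_c V E \<le> card D"
  unfolding gamma_c_def by (rule Least_le) blast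

lemma gamma_c_attained:
  "connected_dominating V E D \<Longrightarrow> \<exists>D'. connected_dominating V E D' \<and> card D' = gamma_c V E"
  unfolding gamma_c_def by (rule LeastI_ex) blast

lemma no_dominating_pair_if_gamma_c_gt_2:
  assumes "\<And>u v. E u v \<Longrightarrow> E v u" "2 < gamma_c V E"
  shows "\<not> dominating_pair V E s t"
proof
  assume "dominating_pair V E s t"
  then have "gamma_c V E \<le> card {s, t}"
    using assms(1) by (intro gamma_c_le_card connected_dominating_pair)
  also have "\<dots> \<le> 2" by (simp add: card_insert_le_m1)
  finally show False using assms(2) by simp
qed

lemma dominating_pair_if_card_lt_3:
  assumes irrefl: "\<And>u. \<not> E u u" and "finite V"
    and D: "connected_dominating V E D" "card D < 3"
  shows "\<exists>s t. dominating_pair V E s t"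
proof -
  have DV: "D \<subseteq> V" and dom: "\<forall>v\<in>V. v \<in> D \<or> (\<exists>d\<in>D. E v d)"
    and conn: "induced_connected E D"
    using D unfolding connected_dominating_def dominating_def by auto
  have "D \<noteq> {}" using conn unfolding induced_connected_def by blast
  moreover have "finite D" using DV \<open>finite V\<close> by (rule finite_subset)
  ultimately have "card D \<noteq> 0" by simp
  then have "card D = 1 \<or> card D = 2" using D(2) by linarith
  then show ?thesis
  proof
    assume "card D = 1"
    then obtain s where "D = {s}" by (rule card_1_singletonE)
    then have "dominating_pair V E s s" using DV dom unfolding dominating_pair_def by auto
    then show ?thesis by blast
  next
    assume "card D = 2"
    then obtain s t where st: "D = {s, t}" "s \<noteq> t" by (auto simp: card_2_iff)
    then obtain z where "z \<in> D" "E s z" using induced_connected_neighbour[OF conn] by blast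
    then have "E s t" using st irrefl by auto
    then have "dominating_pair V E s t" using DV dom st unfolding dominating_pair_def by auto
    then show ?thesis by blast
  qed
qed

lemma dominating_pair_if_gamma_c_lt_3:
  assumes "\<And>u. \<not> E u u" "finite V" "connected_dominating V E D" "gamma_c V E < 3"
  shows "\<exists>s t. dominating_pair V E s t"
proof -
  obtain D' where D': "connected_dominating V E D'" "card D' = gamma_c V E"
    using gamma_c_attained[OF assms(3)] by blast
  show ?thesis
    by (rule dominating_pair_if_card_lt_3[where D = D']) (use assms D' in auto)
qed

lemma dominating_pair_del_vertex:
  "dominating_pair (V - {v}) (del_vertex E v) s t \<longleftrightarrow> dominating_pair (V - {v}) E s t"
  unfolding dominating_pair_def del_vertex_def by auto

lemma dominating_pair_add_edge:
  assumes "dominating_pair V (add_edge E u v) s t" "s \<notin> {u, v}" "t \<notin> {u, v}"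
  shows "dominating_pair V E s t"
  using assms unfolding dominating_pair_def add_edge_def by auto

lemma no_vertex_dominating_all_but_one:
  assumes sg: "simple_graph V E" and g: "2 < gamma_c V E" and conn: "graph_connected V E"
    and "u \<in> V" "v \<in> V" "u \<noteq> v"
  shows "\<not> (\<forall>w\<in>V - {u, v}. E w u)"
proof
  assume dom: "\<forall>w\<in>V - {u, v}. E w u"
  have no_pair: "\<not> dominating_pair V E s t" for s t
    by (rule no_dominating_pair_if_gamma_c_gt_2) (use simple_graph_sym[OF sg] g in auto)
  obtain z where z: "z \<in> V" "E v z"
    using induced_connected_neighbour[of E V v u] conn assms(4-6)
    unfolding graph_connected_def by blast
  show False
  proof (cases "z = u")
    case True
    then have "dominating_pair V E u u"
      using dom z \<open>u \<in> V\<close> unfolding dominating_pair_def by auto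
    then show False using no_pair by blast
  next
    case False
    have "z \<noteq> v" using z(2) simple_graph_irrefl[OF sg] by blast
    then have "E z u" using dom z False by blast
    then have "dominating_pair V E u z"
      using dom z \<open>u \<in> V\<close> simple_graph_sym[OF sg] unfolding dominating_pair_def by auto
    then show False using no_pair by blast
  qed
qed

text \<open>A pair dominating \<open>G - v\<close> and touching \<open>v\<close> would dominate \<open>G\<close>.\<close>
lemma vertex_critical_dominating_pair:
  assumes sg: "simple_graph V E" and vc: "vertex_critical 3 V E" and v: "v \<in> V"
  obtains p q where "dominating_pair (V - {v}) E p q" "p \<noteq> q" "\<not> E p v" "\<not> E q v"
proof -
  have g3: "gamma_c V E = 3" and conn: "graph_connected V E"
    and conn_v: "graph_connected (V - {v}) (del_vertex E v)"
    and lt: "gamma_c (V - {v}) (del_vertex E v) < 3"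
    using vc v unfolding vertex_critical_def two_connected_def by auto
  have sym: "\<And>u w. E u w \<Longrightarrow> E w u"
    using simple_graph_sym[OF sg] by blast
  have "\<exists>p q. dominating_pair (V - {v}) (del_vertex E v) p q"
  proof (rule dominating_pair_if_gamma_c_lt_3)
    show "\<And>u. \<not> del_vertex E v u u"
      using simple_graph_irrefl[OF sg] unfolding del_vertex_def by blast
    show "finite (V - {v})" using simple_graph_finite[OF sg] by simp
  qed (fact connected_dominating_self[OF conn_v] lt)+
  then obtain p q where pq: "dominating_pair (V - {v}) E p q"
    by (auto simp: dominating_pair_del_vertex)
  have "dominating_pair V E p q" if "E p v \<or> E q v"
    using pq that v sym unfolding dominating_pair_def by auto
  then have nonadj: "\<not> E p v" "\<not> E q v"
    using no_dominating_pair_if_gamma_c_gt_2[of E V p q] sym g3 by auto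
  have "p \<noteq> q"
  proof
    assume "p = q"
    then have "\<forall>w\<in>V - {p, v}. E w p" using pq unfolding dominating_pair_def by auto
    moreover have "p \<in> V" "p \<noteq> v" using pq unfolding dominating_pair_def by auto
    ultimately show False
      using no_vertex_dominating_all_but_one[OF sg _ conn _ v] g3 by simp
  qed
  then show thesis using that pq nonadj by blast
qed

lemma induced_connected_mono:
  assumes "induced_connected E S" "\<And>u v. E u v \<Longrightarrow> E' u v"
  shows "induced_connected E' S"
  unfolding induced_connected_def
proof (intro conjI ballI)
  show "S \<noteq> {}" using assms(1) unfolding induced_connected_def by blast
  fix u v assume "u \<in> S" "v \<in> S"
  then have "(\<lambda>a b. E a b \<and> a \<in> S \<and> b \<in> S)\<^sup>*\<^sup>* u v"
    using assms(1) unfolding induced_connected_def by blast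
  then show "(\<lambda>a b. E' a b \<and> a \<in> S \<and> b \<in> S)\<^sup>*\<^sup>* u v"
    by (rule mono_rtranclp[rule_format, rotated]) (use assms(2) in blast)
qed

lemma edge_critical_dominating_pair:
  assumes sg: "simple_graph V E" and conn: "graph_connected V E" and ec: "edge_critical 3 V E"
    and uv: "u \<in> V" "v \<in> V" "u \<noteq> v" "\<not> E u v"
  obtains s t where "dominating_pair V (add_edge E u v) s t"
proof -
  have "gamma_c V (add_edge E u v) < 3"
    using ec uv unfolding edge_critical_def by blast
  moreover have "induced_connected (add_edge E u v) V"
    using conn unfolding graph_connected_def
    by (rule induced_connected_mono) (simp add: add_edge_def)
  then have "connected_dominating V (add_edge E u v) V"
    unfolding connected_dominating_def dominating_def by simp
  moreover have "\<And>w. \<not> add_edge E u v w w"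
    using simple_graph_irrefl[OF sg] \<open>u \<noteq> v\<close> unfolding add_edge_def by blast
  ultimately have "\<exists>s t. dominating_pair V (add_edge E u v) s t"
    using dominating_pair_if_gamma_c_lt_3 simple_graph_finite[OF sg] by blast
  then show thesis using that by blast
qed

lemma independent_clique_meet:
  assumes "independent_set V E I" "clique V E W" "x \<in> I \<inter> W"
  shows "I \<inter> W = {x}"
  using assms unfolding independent_set_def clique_def by blast

lemma card_outside_eq_2:
  assumes "finite V" "I \<subseteq> V" "W \<subseteq> V" "I \<inter> W = {x}" "card I + card W = card V - 1"
  shows "card (V - (I \<union> W)) = 2"
proof -
  have "finite I" "finite W" using assms(1-3) finite_subset by auto
  then have "card (I \<union> W) + 1 = card I + card W"
    using card_Un_Int[of I W] assms(4) by simp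
  moreover have "card (V - (I \<union> W)) = card V - card (I \<union> W)"
    using assms(1-3) by (intro card_Diff_subset) (auto intro: finite_subset)
  ultimately show ?thesis using assms(5) by linarith
qed

text \<open>The configuration of a counterexample once \<open>I \<inter> W\<close> is known to be a single vertex.\<close>
locale almost_split =
  fixes V :: "'a set" and E :: "'a \<Rightarrow> 'a \<Rightarrow> bool" and I W :: "'a set" and x a b :: 'a
  assumes simple: "simple_graph V E"
    and critical: "maximal_vertex_critical 3 V E"
    and I_independent: "independent_set V E I"
    and W_max_clique: "max_clique V E W"
    and min_meet: "\<forall>W'. max_clique V E W' \<longrightarrow> card (I \<inter> W) \<le> card (I \<inter> W')"
    and meet: "I \<inter> W = {x}"
    and cover: "V = I \<union> W \<union> {a, b}"
    and outside: "a \<notin> I \<union> W" "b \<notin> I \<union> W" "a \<noteq> b"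
begin

lemma swap: "almost_split V E I W x b a"
  using almost_split_axioms unfolding almost_split_def by auto

lemma adj_sym: "E u v \<Longrightarrow> E v u"
  using simple by (rule simple_graph_sym)

lemma adj_irrefl: "\<not> E u u"
  using simple by (rule simple_graph_irrefl)

lemma edge_critical: "edge_critical 3 V E"
  and vertex_critical: "vertex_critical 3 V E"
  using critical unfolding maximal_vertex_critical_def by auto

lemma connected: "graph_connected V E"
  using vertex_critical unfolding vertex_critical_def two_connected_def by blast

lemma no_dominating_pair: "\<not> dominating_pair V E s t"
  using no_dominating_pair_if_gamma_c_gt_2[of E V s t] adj_sym edge_critical
  unfolding edge_critical_def by auto

lemma I_nonadj: "i \<in> I \<Longrightarrow> j \<in> I \<Longrightarrow> \<not> E i j"
  using I_independent unfolding independent_set_def by blast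

lemma W_adj: "u \<in> W \<Longrightarrow> v \<in> W \<Longrightarrow> u \<noteq> v \<Longrightarrow> E u v"
  using W_max_clique unfolding max_clique_def clique_def by blast

lemma x_in: "x \<in> I" "x \<in> W" "x \<in> V"
  using meet cover by auto

lemma vertex_cases: "w \<in> V \<Longrightarrow> w \<in> I \<or> w \<in> W \<or> w = a \<or> w = b"
  using cover by blast

lemma I_W_eq_x: "w \<in> I \<Longrightarrow> w \<in> W \<Longrightarrow> w = x"
  using meet by blast

lemma in_V: "a \<in> V" "b \<in> V" "w \<in> I \<Longrightarrow> w \<in> V" "w \<in> W \<Longrightarrow> w \<in> V"
  using cover by auto

lemma no_large_clique_avoiding_I:
  assumes "clique V E K" "card W \<le> card K" "I \<inter> K = {}"
  shows False
proof -
  have "max_clique V E K"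
    using assms(1,2) W_max_clique unfolding max_clique_def by (auto intro: le_trans)
  then show False using min_meet meet assms(3) by fastforce
qed

lemma exists_W_minus_x: "\<exists>y\<in>W. y \<noteq> x"
proof -
  obtain z where z: "z \<in> V" "E x z"
    using induced_connected_neighbour[of E V x a] connected x_in outside in_V
    unfolding graph_connected_def by blast
  have "clique V E {x, z}"
    using z x_in adj_sym unfolding clique_def by auto
  then have "card {x, z} \<le> card W"
    using W_max_clique unfolding max_clique_def by blast
  moreover have "x \<noteq> z" using z adj_irrefl by blast
  ultimately have "\<not> W \<subseteq> {x}"
    using card_mono[of "{x}" W] by auto
  then show ?thesis by blast
qed

lemma x_nonadj_a_or_b: "\<not> E x a \<or> \<not> E x b"
proof -
  obtain p q where pq: "dominating_pair (V - {x}) E p q" "p \<noteq> q" "\<not> E p x" "\<not> E q x"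
    using vertex_critical_dominating_pair[OF simple vertex_critical x_in(3)] by blast
  then have "p \<notin> W" "q \<notin> W" "E p q" "p \<in> V" "q \<in> V"
    using W_adj x_in unfolding dominating_pair_def by blast+
  then have "p \<in> {a, b} \<or> q \<in> {a, b}"
    using vertex_cases I_nonadj by blast
  then show ?thesis using pq(3,4) adj_sym by blast
qed

context
  assumes x_nonadj_b: "\<not> E x b"
begin

text \<open>The pair dominating \<open>G - y\<close> must dominate \<open>x\<close>, and \<open>a\<close> is the only candidate
  neighbour of \<open>x\<close> outside \<open>I \<union> W\<close>.\<close>
lemma pair_at_W:
  assumes y: "y \<in> W" "y \<noteq> x"
  obtains r where "dominating_pair (V - {y}) E a r" "E x a" "E a r" "\<not> E a y" "\<not> E r y"
    "r = b \<or> r \<in> I - {x}"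
proof -
  note result = that
  have outside_W: "p \<notin> W" if "p \<in> V - {y}" "\<not> E p y" for p
    using that y W_adj by blast
  have via_p: thesis
    if pq: "dominating_pair (V - {y}) E p q" "p \<noteq> q" "\<not> E p y" "\<not> E q y" and "E x p" for p q
  proof -
    have "p \<notin> W" "q \<notin> W"
      using outside_W dominating_pairD(1,2)[OF pq(1)] pq(3,4) by blast+
    moreover have "p \<notin> I" using \<open>E x p\<close> I_nonadj x_in by blast
    moreover have "p \<noteq> b" using \<open>E x p\<close> x_nonadj_b by blast
    moreover have "p \<in> V" "q \<in> V" "E p q" using pq unfolding dominating_pair_def by auto
    ultimately have "p = a" "q \<noteq> a" using vertex_cases pq(2) by blast+
    then have "q = b \<or> q \<in> I - {x}"
      using vertex_cases[OF \<open>q \<in> V\<close>] \<open>q \<notin> W\<close> x_in by blast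
    then show thesis using result pq \<open>E x p\<close> \<open>E p q\<close> \<open>p = a\<close> by blast
  qed
  obtain p q where pq: "dominating_pair (V - {y}) E p q" "p \<noteq> q" "\<not> E p y" "\<not> E q y"
    using vertex_critical_dominating_pair[OF simple vertex_critical in_V(4)[OF y(1)]] by blast
  have "p \<noteq> x" "q \<noteq> x" using pq(3,4) W_adj x_in y adj_sym by blast+
  then have "E x p \<or> E x q"
    using pq(1) x_in y unfolding dominating_pair_def by auto
  then show thesis
    using via_p pq via_p[OF dominating_pair_sym[OF adj_sym pq(1)]] by blast
qed

lemma x_adj_a: "E x a"
  using exists_W_minus_x pair_at_W by metis

lemma a_nonadj_W: "y \<in> W \<Longrightarrow> y \<noteq> x \<Longrightarrow> \<not> E a y"
  using pair_at_W by metis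

lemma a_adj_I_if_pair_in_I:
  assumes "y \<in> W" "y \<noteq> x" "dominating_pair (V - {y}) E a r" "r \<in> I" and i: "i \<in> I" "i \<noteq> x"
  shows "E a i"
proof -
  have "i \<noteq> y" "i \<noteq> a" "i \<in> V" "r \<noteq> a" using assms I_W_eq_x outside in_V by blast+
  then have "i = r \<or> E i a \<or> E i r" and "E a r"
    using assms(3) unfolding dominating_pair_def by auto
  then show ?thesis using I_nonadj[OF i(1) assms(4)] adj_sym by blast
qed

lemma a_nonadj_some_I: "E a b \<Longrightarrow> \<exists>i\<in>I - {x}. \<not> E a i"
proof (rule ccontr)
  assume ab: "E a b" and "\<not> (\<exists>i\<in>I - {x}. \<not> E a i)"
  then have a_I: "E w a" if "w \<in> I" "w \<noteq> x" for w
    using that adj_sym by blast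
  have "dominating_pair V E x a"
    unfolding dominating_pair_def
  proof (intro conjI ballI)
    fix w assume "w \<in> V"
    then show "w = x \<or> w = a \<or> E w x \<or> E w a"
      using vertex_cases a_I W_adj[of w x] x_in adj_sym[OF ab] by blast
  qed (use x_in in_V x_adj_a in auto)
  then show False using no_dominating_pair by blast
qed

lemma b_nonadj_W_if_adj_a_b:
  assumes "E a b" "y \<in> W" "y \<noteq> x"
  shows "dominating_pair (V - {y}) E a b" "\<not> E b y"
proof -
  obtain r where r: "dominating_pair (V - {y}) E a r" "\<not> E r y" "r = b \<or> r \<in> I - {x}"
    using pair_at_W[OF assms(2,3)] by blast
  have "r = b"
    using r a_adj_I_if_pair_in_I[OF assms(2,3) r(1)] a_nonadj_some_I[OF assms(1)] by blast
  then show "dominating_pair (V - {y}) E a b" "\<not> E b y" using r by auto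
qed

text \<open>An edge \<open>ab\<close> would force \<open>W = {x, y}\<close>, making \<open>{a, b}\<close> a maximum clique missing \<open>I\<close>.\<close>
lemma a_nonadj_b: "\<not> E a b"
proof
  assume ab: "E a b"
  obtain y0 where y0: "y0 \<in> W" "y0 \<noteq> x" using exists_W_minus_x by blast
  have "W \<subseteq> {x, y0}"
  proof
    fix y assume y: "y \<in> W"
    show "y \<in> {x, y0}"
    proof (rule ccontr)
      assume "y \<notin> {x, y0}"
      then have "y = a \<or> y = b \<or> E y a \<or> E y b"
        using b_nonadj_W_if_adj_a_b(1)[OF ab y0] y in_V unfolding dominating_pair_def by blast
      moreover have "\<not> E y a" "\<not> E y b"
        using a_nonadj_W b_nonadj_W_if_adj_a_b(2)[OF ab y] \<open>y \<notin> {x, y0}\<close> y adj_sym by blast+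
      ultimately show False using y outside by blast
    qed
  qed
  then have "card W \<le> card {x, y0}" by (simp add: card_mono)
  also have "\<dots> \<le> card {a, b}" using outside(3) by (simp add: card_insert_if)
  finally have "card W \<le> card {a, b}" .
  moreover have "clique V E {a, b}" using ab in_V adj_sym unfolding clique_def by auto
  ultimately show False using no_large_clique_avoiding_I outside by blast
qed

lemma no_added_pair_at_b:
  assumes y: "y \<in> W" "y \<noteq> x"
  shows "\<not> dominating_pair V (add_edge E b y) b t"
proof
  assume d: "dominating_pair V (add_edge E b y) b t"
  have a: "a \<noteq> b" "a \<noteq> y" "\<not> E a b" "\<not> E a y"
    using outside y a_nonadj_b a_nonadj_W by blast+
  have "a = t \<or> E a t"
    using dominating_pairD(4)[OF d in_V(1)] a by (simp add: add_edge_def)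
  moreover have "a \<noteq> t"
    using dominating_pairD(3)[OF d] a adj_sym by (auto simp: add_edge_def)
  ultimately have at: "E a t" by blast
  then have "t \<noteq> b" "t \<noteq> y" using a by blast+
  then have "E b t" using dominating_pairD(3)[OF d] by (simp add: add_edge_def)
  then have "t \<noteq> x" using x_nonadj_b adj_sym by blast
  then have "t \<notin> W" "t \<noteq> a" using at a_nonadj_W adj_irrefl by blast+
  then have "t \<in> I" using vertex_cases[OF dominating_pairD(2)[OF d]] \<open>t \<noteq> b\<close> by blast
  then have "\<not> E x t" using I_nonadj x_in by blast
  moreover have "x \<noteq> b" "x \<noteq> y" using x_in outside y by blast+
  ultimately show False
    using dominating_pairD(4)[OF d x_in(3)] x_nonadj_b \<open>t \<noteq> x\<close> by (simp add: add_edge_def)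
qed

lemma added_pair_at_W_dominates_I:
  assumes y: "y \<in> W" "y \<noteq> x"
    and d: "dominating_pair V (add_edge E b y) y t" "t \<noteq> b" and i: "i \<in> I" "i \<noteq> x"
  shows "E y i"
proof -
  have a: "a \<noteq> b" "a \<noteq> y" "\<not> E a y"
    using outside y a_nonadj_W by blast+
  have "a = t \<or> E a t"
    using dominating_pairD(4)[OF d(1) in_V(1)] a by (simp add: add_edge_def)
  moreover have "a \<noteq> t"
    using dominating_pairD(3)[OF d(1)] a adj_sym by (auto simp: add_edge_def)
  ultimately have at: "E a t" by blast
  then have "t \<noteq> y" using a by blast
  then have "E y t" using dominating_pairD(3)[OF d(1)] d(2) by (simp add: add_edge_def)
  have "t \<notin> W - {x}" "t \<noteq> a" using at a_nonadj_W adj_irrefl by blast+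
  then have "t \<in> I" using vertex_cases[OF dominating_pairD(2)[OF d(1)]] d(2) x_in by blast
  moreover have "i \<noteq> y" "i \<noteq> b" using i I_W_eq_x y outside by blast+
  ultimately show ?thesis
    using dominating_pairD(4)[OF d(1) in_V(3)[OF i(1)]] \<open>E y t\<close> I_nonadj[OF i(1)] adj_sym
    by (auto simp: add_edge_def)
qed

text \<open>Adding the edge \<open>by\<close> creates a connected dominating pair; it must contain \<open>y\<close>,
  which then dominates \<open>I - {x}\<close>, contradicting the pair found for \<open>G - y\<close>.\<close>
lemma b_adj_W:
  assumes y: "y \<in> W" "y \<noteq> x"
  shows "E b y"
proof (rule ccontr)
  assume nb: "\<not> E b y"
  have "b \<noteq> y" using y outside by blast
  obtain s t where d: "dominating_pair V (add_edge E b y) s t"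
    using edge_critical_dominating_pair[OF simple connected edge_critical in_V(2) in_V(4)[OF y(1)]
        \<open>b \<noteq> y\<close> nb] by blast
  have d': "dominating_pair V (add_edge E b y) t s"
    using d by (rule dominating_pair_sym[rotated]) (auto simp: add_edge_def adj_sym)
  have y_adj_I: "\<forall>i\<in>I - {x}. E y i"
  proof (cases "s \<in> {b, y} \<or> t \<in> {b, y}")
    case True
    then consider "s = b" | "t = b" | "s = y" "t \<noteq> b" | "t = y" "s \<noteq> b" by blast
    then show ?thesis
    proof cases
      case 1
      then show ?thesis using no_added_pair_at_b[OF y] d by blast
    next
      case 2
      then show ?thesis using no_added_pair_at_b[OF y] d' by blast
    next
      case 3
      then show ?thesis using added_pair_at_W_dominates_I[OF y] d by blast
    next
      case 4
      then show ?thesis using added_pair_at_W_dominates_I[OF y] d' by blast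
    qed
  next
    case False
    then show ?thesis
      using dominating_pair_add_edge[OF d] no_dominating_pair by blast
  qed
  obtain r where "E a r" "\<not> E r y" "r = b \<or> r \<in> I - {x}"
    using pair_at_W[OF y] by blast
  then show False using y_adj_I a_nonadj_b adj_sym by blast
qed

text \<open>Exchanging \<open>x\<close> for \<open>b\<close> gives a maximum clique missing \<open>I\<close>.\<close>
lemma x_nonadj_b_impossible: False
proof -
  let ?K = "insert b (W - {x})"
  have "finite W"
    using simple_graph_finite[OF simple] in_V(4) by (blast intro: finite_subset)
  then have "card ?K = card W"
    using outside x_in card_Suc_Diff1[of W x] by simp
  moreover have "clique V E ?K"
    using b_adj_W W_adj in_V adj_sym unfolding clique_def by auto
  moreover have "I \<inter> ?K = {}" using meet outside by blast
  ultimately show False by (intro no_large_clique_avoiding_I[of ?K]) simp_all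
qed

end

lemma x_adj_b: "E x b"
  using x_nonadj_b_impossible by blast

end

lemma almost_split_impossible: "\<not> almost_split V E I W x a b"
proof
  assume "almost_split V E I W x a b"
  then interpret almost_split V E I W x a b .
  show False
    using x_adj_b almost_split.x_adj_b[OF swap] x_nonadj_a_or_b by blast
qed

theorem lemma3p5:
  fixes V :: "'a set" and E :: "'a \<Rightarrow> 'a \<Rightarrow> bool" and I W :: "'a set"
  assumes "simple_graph V E"
    and "graph_connected V E"
    and "maximal_vertex_critical 3 V E"
    and "max_independent_set V E I"
    and "max_clique V E W"
    and "\<forall>W'. max_clique V E W' \<longrightarrow> card (I \<inter> W) \<le> card (I \<inter> W')"
    and "card I + card W = card V - 1"
  shows "card (W \<inter> I) = 0"
proof (rule ccontr)
  assume "card (W \<inter> I) \<noteq> 0"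
  then obtain x where "x \<in> I \<inter> W" by (metis card.empty disjoint_iff Int_iff)
  have I: "independent_set V E I" and W: "clique V E W"
    using assms(4,5) unfolding max_independent_set_def max_clique_def by blast+
  then have sub: "I \<subseteq> V" "W \<subseteq> V" unfolding independent_set_def clique_def by blast+
  have meet: "I \<inter> W = {x}" using independent_clique_meet[OF I W \<open>x \<in> I \<inter> W\<close>] .
  have "card (V - (I \<union> W)) = 2"
    using card_outside_eq_2[OF simple_graph_finite[OF assms(1)] sub meet assms(7)] .
  then obtain a b where ab: "V - (I \<union> W) = {a, b}" "a \<noteq> b" by (auto simp: card_2_iff)
  have "almost_split V E I W x a b"
    unfolding almost_split_def using assms(1,3,5,6) I meet ab sub by blast
  with almost_split_impossible show False by metis
qed

end
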